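(* Let $\Delta\subseteq\{0,1\}^N$, $g:\Delta\to\{0,1\}$ a partial Boolean function, and $\delta\in(0,1/2)$. Let $V_1=g^{-1}(1)$ and $V_0=g^{-1}(0)$ (assumed nonempty). Suppose that for some number $K>0$ there is a bipartite graph $H=(V_1\cup V_0,E)$ such that: (i) for every edge $(x,y)\in E$ with $x\in V_1$, $y\in V_0$, there is a sensitive block $B$ of $g$ on $x$ with $y=x^B$; (ii) every $x\in V_1$ has degree $\deg(x)\ge 2K$ in $H$, and the sensitive blocks $B_{x,1},\dots,B_{x,\deg(x)}$ on $x$ corresponding to the edges incident to $x$ are pairwise disjoint; (iii) every $y\in V_0$ has degree at most $d=\left(\frac{1}{2\delta}-1\right)K\frac{|V_1|}{|V_0|}$ in $H$. Then $C_\delta(g)\ge K$.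
   Context: For $x\in\{0,1\}^N$ and $B\subseteq\{1,\dots,N\}$, $x^B$ denotes $x$ with every bit indexed by $B$ flipped. A sensitive block of $g$ on $x\in\Delta$ is a set $B$ such that $x^B\in\Delta$ and $g(x^B)\ne g(x)$. Canonical distribution $\mathcal{D}_g$ on $\Delta$: with probability $1/2$ a uniform element of $g^{-1}(1)$, with probability $1/2$ a uniform element of $g^{-1}(0)$. A certificate of $f:\Delta\to\{0,1\}$ on $x\in\Delta$ is a set $C\subseteq\{1,\dots,N\}$ such that every $y\in\Delta$ with $y|_C=x|_C$ has $f(y)=f(x)$; $C(f)=\max_{x\in\Delta}\min\{|C|: C\text{ certificate of } f \text{ on }x\}$. The $\delta$-approximate certificate complexity is $C_\delta(g)=\min\{C(f): f:\Delta\to\{0,1\},\ \Pr_{x\sim\mathcal{D}_g}[f(x)\ne g(x)]\le\delta\}$. *)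

theory Defs
  imports Complex_Main
begin

text \<open>A point x of {0,1}^N is encoded as the set of indices in {1..N} where x has a 1.
  Partial Boolean functions are functions nat set => bool considered on the domain Delta
  (True = 1, False = 0).\<close>

definition cube :: "nat \<Rightarrow> nat set set" where
  "cube N = {x. x \<subseteq> {1..N}}"

definition flip :: "nat set \<Rightarrow> nat set \<Rightarrow> nat set" where
  "flip x B = (x - B) \<union> (B - x)"

definition sensitive_block ::
  "nat \<Rightarrow> nat set set \<Rightarrow> (nat set \<Rightarrow> bool) \<Rightarrow> nat set \<Rightarrow> nat set \<Rightarrow> bool" where
  "sensitive_block N Delta g x B \<longleftrightarrow>
     B \<subseteq> {1..N} \<and> flip x B \<in> Delta \<and> g (flip x B) \<noteq> g x"

definition is_certificate ::
  "nat \<Rightarrow> nat set set \<Rightarrow> (nat set \<Rightarrow> bool) \<Rightarrow> nat set \<Rightarrow> nat set \<Rightarrow> bool" where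
  "is_certificate N Delta f x C \<longleftrightarrow>
     C \<subseteq> {1..N} \<and> (\<forall>y\<in>Delta. (\<forall>i\<in>C. (i \<in> y) = (i \<in> x)) \<longrightarrow> f y = f x)"

definition cert_complexity :: "nat \<Rightarrow> nat set set \<Rightarrow> (nat set \<Rightarrow> bool) \<Rightarrow> nat" where
  "cert_complexity N Delta f =
     Max ((\<lambda>x. Min {card C | C. is_certificate N Delta f x C}) ` Delta)"

text \<open>Probability, under the canonical distribution D_g, that f disagrees with g.\<close>
definition canon_error ::
  "nat set set \<Rightarrow> (nat set \<Rightarrow> bool) \<Rightarrow> (nat set \<Rightarrow> bool) \<Rightarrow> real" where
  "canon_error Delta g f =
     (1/2) * real (card {x\<in>Delta. g x \<and> f x \<noteq> g x}) / real (card {x\<in>Delta. g x})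
   + (1/2) * real (card {x\<in>Delta. \<not> g x \<and> f x \<noteq> g x}) / real (card {x\<in>Delta. \<not> g x})"

definition approx_cert_complexity ::
  "nat \<Rightarrow> nat set set \<Rightarrow> (nat set \<Rightarrow> bool) \<Rightarrow> real \<Rightarrow> nat" where
  "approx_cert_complexity N Delta g \<delta> =
     Min {cert_complexity N Delta f | f. canon_error Delta g f \<le> \<delta>}"

end

theory Submission
  imports Defs
begin

text \<open>Suppose f has error at most \<delta> under the canonical distribution but certificate complexity
  below K. A certificate of f at a point x of V1 with f x = 1 meets fewer than K of the at least 2K
  disjoint blocks at x, so more than K neighbours y of x keep f y = 1, i.e. are errors on V0. Double
  counting these edges against the degree bound d on V0 shows that if a fraction p of V1 is
  classified correctly, then a fraction q \<ge> 2\<delta> p / (1 - 2\<delta>) of V0 is misclassified; but then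
  the error (1 - p)/2 + q/2 exceeds \<delta> for every p in [0,1].\<close>

lemma finite_subset_cube: "Delta \<subseteq> cube N \<Longrightarrow> finite Delta"
  unfolding cube_def by (rule finite_subset[of _ "Pow {1..N}"]) auto

lemma finite_certificate: "is_certificate N Delta f x C \<Longrightarrow> finite C"
  unfolding is_certificate_def using finite_subset by blast

lemma is_certificate_all_indices:
  "Delta \<subseteq> cube N \<Longrightarrow> x \<in> Delta \<Longrightarrow> is_certificate N Delta f x {1..N}"
  unfolding is_certificate_def cube_def
proof (intro conjI ballI impI)
  fix y assume "Delta \<subseteq> {x. x \<subseteq> {1..N}}" "x \<in> Delta" "y \<in> Delta"
    and "\<forall>i\<in>{1..N}. (i \<in> y) = (i \<in> x)"
  then have "y = x" by blast
  then show "f y = f x" by simp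
qed simp

lemma finite_certificate_cards: "finite {card C | C. is_certificate N Delta f x C}"
proof (rule finite_subset)
  show "{card C | C. is_certificate N Delta f x C} \<subseteq> card ` Pow {1..N}"
    unfolding is_certificate_def by auto
qed simp

lemma min_certificate_card_in:
  assumes "Delta \<subseteq> cube N" "x \<in> Delta"
  shows "Min {card C | C. is_certificate N Delta f x C} \<in> {card C | C. is_certificate N Delta f x C}"
  using is_certificate_all_indices[OF assms] by (intro Min_in finite_certificate_cards) auto

lemma certificate_card_le_cert_complexity:
  assumes "Delta \<subseteq> cube N" "x \<in> Delta"
  obtains C where "is_certificate N Delta f x C" "card C \<le> cert_complexity N Delta f"
proof -
  obtain C where C: "is_certificate N Delta f x C"
    and card_C: "card C = Min {card C | C. is_certificate N Delta f x C}"
    using min_certificate_card_in[OF assms, of f] by force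
  have "card C \<le> cert_complexity N Delta f"
    unfolding card_C cert_complexity_def using finite_subset_cube[OF assms(1)] assms(2) by auto
  with C show thesis
    by (rule that)
qed

lemma cert_complexity_le_dim:
  assumes "Delta \<subseteq> cube N" "Delta \<noteq> {}"
  shows "cert_complexity N Delta f \<le> N"
  unfolding cert_complexity_def
proof (rule Max.boundedI)
  fix m assume "m \<in> (\<lambda>x. Min {card C | C. is_certificate N Delta f x C}) ` Delta"
  then obtain x where "x \<in> Delta" and m: "m = Min {card C | C. is_certificate N Delta f x C}"
    by blast
  then have "card {1..N} \<in> {card C | C. is_certificate N Delta f x C}"
    using is_certificate_all_indices[OF assms(1)] by blast
  then show "m \<le> N"
    unfolding m using Min_le[OF finite_certificate_cards] by fastforce
qed (use finite_subset_cube[OF assms(1)] assms(2) in auto)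

lemma approx_cert_complexity_lower_bound:
  assumes "Delta \<subseteq> cube N" "Delta \<noteq> {}" "0 \<le> \<delta>"
    and "\<And>f. canon_error Delta g f \<le> \<delta> \<Longrightarrow> K \<le> real (cert_complexity N Delta f)"
  shows "K \<le> real (approx_cert_complexity N Delta g \<delta>)"
proof -
  let ?P = "{cert_complexity N Delta f | f. canon_error Delta g f \<le> \<delta>}"
  have "canon_error Delta g g = 0"
    unfolding canon_error_def by simp
  then have "cert_complexity N Delta g \<in> ?P"
    using assms(3) by auto
  then have "?P \<noteq> {}"
    by blast
  moreover have "?P \<subseteq> {..N}"
    using cert_complexity_le_dim[OF assms(1,2)] by blast
  then have "finite ?P"
    by (rule finite_subset) simp
  ultimately have "Min ?P \<in> ?P"
    by (rule Min_in[rotated])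
  then obtain f where "canon_error Delta g f \<le> \<delta>"
    and "approx_cert_complexity N Delta g \<delta> = cert_complexity N Delta f"
    unfolding approx_cert_complexity_def by blast
  then show ?thesis
    using assms(4) by simp
qed

lemma certificate_flip_disjoint:
  assumes "is_certificate N Delta f x C" "flip x B \<in> Delta" "B \<inter> C = {}"
  shows "f (flip x B) = f x"
proof -
  have "\<forall>i\<in>C. (i \<in> flip x B) = (i \<in> x)"
    using assms(3) unfolding flip_def by blast
  then show ?thesis
    using assms(1,2) unfolding is_certificate_def by blast
qed

lemma card_hitting_disjoint_family_le:
  assumes "finite C"
    and "\<And>y y'. y \<in> Y \<Longrightarrow> y' \<in> Y \<Longrightarrow> y \<noteq> y' \<Longrightarrow> b y \<inter> b y' = {}"
  shows "card {y\<in>Y. b y \<inter> C \<noteq> {}} \<le> card C"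
proof -
  define h where "h y = (SOME i. i \<in> b y \<inter> C)" for y
  have h: "h y \<in> b y \<inter> C" if "b y \<inter> C \<noteq> {}" for y
    unfolding h_def some_in_eq using that .
  have "inj_on h {y\<in>Y. b y \<inter> C \<noteq> {}}"
  proof (rule inj_onI)
    fix y y' assume "y \<in> {y\<in>Y. b y \<inter> C \<noteq> {}}" "y' \<in> {y\<in>Y. b y \<inter> C \<noteq> {}}" "h y = h y'"
    then show "y = y'"
      using h[of y] h[of y'] assms(2)[of y y'] by auto
  qed
  moreover have "h ` {y\<in>Y. b y \<inter> C \<noteq> {}} \<subseteq> C"
    using h by auto
  ultimately show ?thesis
    using assms(1) by (metis card_inj_on_le)
qed

lemma card_le_agreeing_flips_plus_certificate:
  assumes C: "is_certificate N Delta f x C" and "finite Y"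
    and Y: "\<And>y. y \<in> Y \<Longrightarrow> y \<in> Delta \<and> y = flip x (b y)"
    and disj: "\<And>y y'. y \<in> Y \<Longrightarrow> y' \<in> Y \<Longrightarrow> y \<noteq> y' \<Longrightarrow> b y \<inter> b y' = {}"
  shows "card Y \<le> card {y\<in>Y. f y = f x} + card C"
proof -
  have "b y \<inter> C \<noteq> {}" if "y \<in> Y" "f y \<noteq> f x" for y
    using Y[OF that(1)] certificate_flip_disjoint[OF C] that(2) by metis
  then have "{y\<in>Y. f y \<noteq> f x} \<subseteq> {y\<in>Y. b y \<inter> C \<noteq> {}}"
    by blast
  then have "card {y\<in>Y. f y \<noteq> f x} \<le> card {y\<in>Y. b y \<inter> C \<noteq> {}}"
    by (rule card_mono[rotated]) (simp add: \<open>finite Y\<close>)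
  also have "\<dots> \<le> card C"
    using finite_certificate[OF C] disj by (rule card_hitting_disjoint_family_le)
  finally have "card {y\<in>Y. f y \<noteq> f x} \<le> card C" .
  moreover have "Y = {y\<in>Y. f y = f x} \<union> {y\<in>Y. f y \<noteq> f x}"
    by blast
  then have "card Y \<le> card {y\<in>Y. f y = f x} + card {y\<in>Y. f y \<noteq> f x}"
    by (metis card_Un_le)
  ultimately show ?thesis
    by linarith
qed

lemma double_counting_le:
  fixes a b :: real
  assumes "finite A" "finite B"
    and "\<And>x. x \<in> A \<Longrightarrow> a \<le> card {y\<in>B. R x y}"
    and "\<And>y. y \<in> B \<Longrightarrow> card {x\<in>A. R x y} \<le> b"
  shows "a * card A \<le> b * card B"
proof -
  have "a * card A = (\<Sum>x\<in>A. a)"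
    by simp
  also have "\<dots> \<le> (\<Sum>x\<in>A. real (card {y\<in>B. R x y}))"
    by (rule sum_mono) (rule assms(3))
  also have "\<dots> = (\<Sum>y\<in>B. real (card {x\<in>A. R x y}))"
    using sum.swap_restrict[OF assms(1,2), of "\<lambda>_ _. 1::real" R] by simp
  also have "\<dots> \<le> (\<Sum>y\<in>B. b)"
    by (rule sum_mono) (rule assms(4))
  also have "\<dots> = b * card B"
    by simp
  finally show ?thesis .
qed

lemma canon_error_eq:
  assumes "finite Delta" "{x\<in>Delta. g x} \<noteq> {}"
  shows "canon_error Delta g f =
    (1 - card {x\<in>Delta. g x \<and> f x} / card {x\<in>Delta. g x}) / 2
    + card {x\<in>Delta. \<not> g x \<and> f x} / card {x\<in>Delta. \<not> g x} / 2"
proof -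
  have "{x\<in>Delta. g x \<and> f x \<noteq> g x} = {x\<in>Delta. g x} - {x\<in>Delta. g x \<and> f x}"
    by blast
  moreover have "{x\<in>Delta. \<not> g x \<and> f x \<noteq> g x} = {x\<in>Delta. \<not> g x \<and> f x}"
    by blast
  moreover have "{x\<in>Delta. g x \<and> f x} \<subseteq> {x\<in>Delta. g x}"
    by blast
  ultimately show ?thesis
    using assms unfolding canon_error_def
    by (simp add: card_Diff_subset card_mono finite_subset field_simps card_gt_0_iff)
qed

lemma delta_lt_half_miss_plus_half_false_alarm:
  fixes \<delta> p q :: real
  assumes "0 < \<delta>" "\<delta> < 1/2" "0 \<le> p" "p \<le> 1" "2 * \<delta> * p \<le> (1 - 2 * \<delta>) * q"
  shows "\<delta> < (1 - p) / 2 + q / 2"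
proof -
  have "2 * (1 - 2 * \<delta>) * ((1 - p) / 2 + q / 2 - \<delta>)
      = (1 - p) * (1 - 2 * \<delta>)\<^sup>2 + p * (2 * \<delta>)\<^sup>2 + ((1 - 2 * \<delta>) * q - 2 * \<delta> * p)"
    by (simp add: field_simps power2_eq_square)
  moreover have "0 < (1 - p) * (1 - 2 * \<delta>)\<^sup>2 + p * (2 * \<delta>)\<^sup>2"
  proof (cases "p = 1")
    case False
    then show ?thesis
      using assms by (intro add_pos_nonneg) auto
  qed (use assms in simp)
  ultimately have "0 < 2 * (1 - 2 * \<delta>) * ((1 - p) / 2 + q / 2 - \<delta>)"
    using assms(5) by linarith
  then have "0 < (1 - p) / 2 + q / 2 - \<delta>"
    by (rule zero_less_mult_pos) (use assms(2) in simp)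
  then show ?thesis
    by simp
qed

locale sensitive_block_graph =
  fixes N :: nat and Delta :: "nat set set" and g :: "nat set \<Rightarrow> bool"
    and V1 V0 :: "nat set set" and \<delta> K :: real and E :: "(nat set \<times> nat set) set"
    and blk :: "nat set \<Rightarrow> nat set \<Rightarrow> nat set"
  assumes V1_eq: "V1 = {x\<in>Delta. g x}" and V0_eq: "V0 = {x\<in>Delta. \<not> g x}"
    and Delta_sub: "Delta \<subseteq> cube N"
    and delta: "0 < \<delta>" "\<delta> < 1/2"
    and V1_ne: "V1 \<noteq> {}"
    and K_pos: "K > 0"
    and E_bip: "E \<subseteq> V1 \<times> V0"
    and edge_flip: "\<And>x y. (x, y) \<in> E \<Longrightarrow> y = flip x (blk x y)"
    and deg1: "\<And>x. x \<in> V1 \<Longrightarrow> real (card {y. (x, y) \<in> E}) \<ge> 2 * K"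
    and disj: "\<And>x y y'. (x, y) \<in> E \<Longrightarrow> (x, y') \<in> E \<Longrightarrow> y \<noteq> y' \<Longrightarrow>
                        blk x y \<inter> blk x y' = {}"
    and deg0: "\<And>y. y \<in> V0 \<Longrightarrow> real (card {x. (x, y) \<in> E})
                  \<le> (1 / (2 * \<delta>) - 1) * K * real (card V1) / real (card V0)"
begin

lemma finite_V1: "finite V1" and finite_V0: "finite V0"
  using finite_subset_cube[OF Delta_sub] unfolding V1_eq V0_eq by simp_all

lemma card_false_alarm_neighbours_gt:
  assumes "x \<in> V1" "f x" "real (cert_complexity N Delta f) < K"
  shows "K < real (card {y\<in>{y\<in>V0. f y}. (x, y) \<in> E})"
proof -
  obtain C where C: "is_certificate N Delta f x C" "card C \<le> cert_complexity N Delta f"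
    using certificate_card_le_cert_complexity[OF Delta_sub] assms(1) V1_eq by blast
  let ?Nx = "{y. (x, y) \<in> E}"
  have "?Nx \<subseteq> V0"
    using E_bip by blast
  have "card ?Nx \<le> card {y\<in>?Nx. f y = f x} + card C"
  proof (rule card_le_agreeing_flips_plus_certificate[OF C(1), where b = "blk x"])
    show "finite ?Nx"
      using finite_V0 \<open>?Nx \<subseteq> V0\<close> by (rule finite_subset[rotated])
    show "y \<in> Delta \<and> y = flip x (blk x y)" if "y \<in> ?Nx" for y
      using that \<open>?Nx \<subseteq> V0\<close> V0_eq edge_flip by auto
    show "blk x y \<inter> blk x y' = {}" if "y \<in> ?Nx" "y' \<in> ?Nx" "y \<noteq> y'" for y y'
      using that disj by simp
  qed
  moreover have "{y\<in>?Nx. f y = f x} = {y\<in>{y\<in>V0. f y}. (x, y) \<in> E}"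
    using \<open>?Nx \<subseteq> V0\<close> assms(2) by auto
  moreover have "2 * K \<le> card ?Nx"
    using deg1 assms(1) by simp
  ultimately show ?thesis
    using C(2) assms(3) by (smt (verit) of_nat_add of_nat_mono)
qed

lemma false_alarm_rate_ge:
  assumes "real (cert_complexity N Delta f) < K"
  shows "2 * \<delta> * (card {x\<in>V1. f x} / card V1) \<le> (1 - 2 * \<delta>) * (card {y\<in>V0. f y} / card V0)"
proof -
  define d where "d = (1 / (2 * \<delta>) - 1) * K * real (card V1) / real (card V0)"
  let ?r = "(1 - 2 * \<delta>) / (2 * \<delta>) * (card {y\<in>V0. f y} / card V0)"
  have "K * card {x\<in>V1. f x} \<le> d * card {y\<in>V0. f y}"
  proof (rule double_counting_le[where R = "\<lambda>x y. (x, y) \<in> E"])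
    fix x assume "x \<in> {x\<in>V1. f x}"
    then show "K \<le> card {y\<in>{y\<in>V0. f y}. (x, y) \<in> E}"
      using card_false_alarm_neighbours_gt assms by fastforce
  next
    fix y assume y: "y \<in> {y\<in>V0. f y}"
    have "card {x\<in>{x\<in>V1. f x}. (x, y) \<in> E} \<le> card {x. (x, y) \<in> E}"
      using E_bip finite_V1 by (intro card_mono) (auto intro: finite_subset)
    then show "card {x\<in>{x\<in>V1. f x}. (x, y) \<in> E} \<le> d"
      using deg0 y unfolding d_def by fastforce
  qed (use finite_V1 finite_V0 in simp_all)
  moreover have "d * card {y\<in>V0. f y} = K * (card V1 * ?r)"
    unfolding d_def using delta by (simp add: field_simps)
  ultimately have "K * card {x\<in>V1. f x} \<le> K * (card V1 * ?r)"
    by simp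
  then have "card {x\<in>V1. f x} \<le> card V1 * ?r"
    using K_pos by (rule mult_left_le_imp_le)
  then have "card {x\<in>V1. f x} / card V1 \<le> ?r"
    using V1_ne finite_V1 by (subst pos_divide_le_eq) (simp_all add: card_gt_0_iff mult.commute)
  then have "2 * \<delta> * (card {x\<in>V1. f x} / card V1) \<le> 2 * \<delta> * ?r"
    by (rule mult_left_mono) (use delta in simp)
  then show ?thesis
    using delta by simp
qed

lemma canon_error_gt:
  assumes "real (cert_complexity N Delta f) < K"
  shows "\<delta> < canon_error Delta g f"
proof -
  have "{x\<in>Delta. g x \<and> f x} \<subseteq> V1"
    unfolding V1_eq by blast
  then have "card {x\<in>Delta. g x \<and> f x} / card V1 \<le> 1"
    using finite_V1 V1_ne by (simp add: card_mono card_gt_0_iff)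
  moreover have "{x\<in>V1. f x} = {x\<in>Delta. g x \<and> f x}" "{y\<in>V0. f y} = {x\<in>Delta. \<not> g x \<and> f x}"
    unfolding V1_eq V0_eq by auto
  ultimately show ?thesis
    using false_alarm_rate_ge[OF assms] delta
    unfolding canon_error_eq[OF finite_subset_cube[OF Delta_sub] V1_ne[unfolded V1_eq]] V1_eq V0_eq
    by (intro delta_lt_half_miss_plus_half_false_alarm) auto
qed

end

theorem theorem5p10:
  fixes N :: nat and Delta :: "nat set set" and g :: "nat set \<Rightarrow> bool"
    and \<delta> K :: real and E :: "(nat set \<times> nat set) set"
    and blk :: "nat set \<Rightarrow> nat set \<Rightarrow> nat set"
  defines "V1 \<equiv> {x\<in>Delta. g x}" and "V0 \<equiv> {x\<in>Delta. \<not> g x}"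
  assumes Delta_sub: "Delta \<subseteq> cube N"
    and delta: "0 < \<delta>" "\<delta> < 1/2"
    and V1_ne: "V1 \<noteq> {}" and V0_ne: "V0 \<noteq> {}"
    and K_pos: "K > 0"
    and E_bip: "E \<subseteq> V1 \<times> V0"
    and edge_block: "\<And>x y. (x, y) \<in> E \<Longrightarrow>
                        sensitive_block N Delta g x (blk x y) \<and> y = flip x (blk x y)"
    and deg1: "\<And>x. x \<in> V1 \<Longrightarrow> real (card {y. (x, y) \<in> E}) \<ge> 2 * K"
    and disj: "\<And>x y y'. (x, y) \<in> E \<Longrightarrow> (x, y') \<in> E \<Longrightarrow> y \<noteq> y' \<Longrightarrow>
                        blk x y \<inter> blk x y' = {}"
    and deg0: "\<And>y. y \<in> V0 \<Longrightarrow> real (card {x. (x, y) \<in> E})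
                  \<le> (1 / (2 * \<delta>) - 1) * K * real (card V1) / real (card V0)"
  shows "real (approx_cert_complexity N Delta g \<delta>) \<ge> K"
proof -
  interpret sensitive_block_graph N Delta g V1 V0 \<delta> K E blk
    by unfold_locales (fact | simp add: V1_def V0_def edge_block)+
  have "Delta \<noteq> {}"
    using V1_ne unfolding V1_def by blast
  then show ?thesis
  proof (rule approx_cert_complexity_lower_bound[OF Delta_sub])
    show "0 \<le> \<delta>"
      using delta by simp
    show "K \<le> real (cert_complexity N Delta f)" if "canon_error Delta g f \<le> \<delta>" for f
      using canon_error_gt[of f] that by linarith
  qed
qed

end
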